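(* Fix an episode $\ell$ and two random functions $Q_1, Q_2 \in \mathbb{R}^{\mathcal{X}\times\mathcal{A}}$. Suppose that, conditioned on $\mathcal{H}_{\ell-1}$, for each $i = 1,2$ the entries $Q_i(x,a)$ are independent across $(x,a)$ and independent of the RLSVI noise terms $w_\ell(t,x,a)$. If \[ Q_1(x,a)\mid\mathcal{H}_{\ell-1} \succeq_{SO} Q_2(x,a)\mid\mathcal{H}_{\ell-1} \qquad \forall (x,a)\in\mathcal{X}\times\mathcal{A}, \] then \[ F_{\ell,t}Q_1(x,a)\mid\mathcal{H}_{\ell-1} \succeq_{SO} F_{\ell,t}Q_2(x,a)\mid\mathcal{H}_{\ell-1} \qquad \forall (x,a)\in\mathcal{X}\times\mathcal{A},\ t\in\{0,\dots,H-1\}. \]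
   Context: Stochastic optimism: $X \succeq_{SO} Y$ if $\mathbb{E}[u(X)]\ge\mathbb{E}[u(Y)]$ for every convex increasing $u:\mathbb{R}\to\mathbb{R}$; "$\mid \mathcal{H}_{\ell-1}$" means the comparison holds for the conditional distributions given $\mathcal{H}_{\ell-1}$. Setting: episodic finite-horizon MDP with finite state set $\mathcal{X}$, finite action set $\mathcal{A}$, horizon $H$; in episode $k$ and period $t\in\{0,\dots,H-1\}$ the agent is in state $x^k_t$, takes action $a^k_t$, and observes outcome $(r^k_{t+1},x^k_{t+1})\in\{0,1\}\times\mathcal{X}$. $\mathcal{H}_{\ell-1}$ is the history of all observations in episodes $1,\dots,\ell-1$. $D_{\ell-1}(t,x,a)$ is the multiset of outcomes $(r^k_{t+1},x^k_{t+1})$ over $k<\ell$ with $x^k_t=x$, $a^k_t=a$, and $n_\ell(t,x,a)$ its size. RLSVI Bellman operator with parameters $\bar\theta$, $v>0$, $\lambda>0$: $\sigma^2_\ell(t,x,a) = (1/\lambda + n_\ell(t,x,a)/v)^{-1}$; $w_\ell(t,x,a)$ is, conditionally on $\mathcal{H}_{\ell-1}$, $N(0,\sigma^2_\ell(t,x,a))$, with $w_\ell(t,x,a)/\sigma_\ell(t,x,a)$ i.i.d. standard normal across $\ell$ and $(t,x,a)$; and \[F_{\ell,t}Q(x,a) = \sigma^2_\ell(t,x,a)\Big(\frac{\bar\theta_{t,x,a}}{\lambda} + \frac1v\sum_{(r,x')\in D_{\ell-1}(t,x,a)}\big(r+\max_{a'\in\mathcal{A}}Q(x',a')\big)\Big)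 + w_\ell(t,x,a).\] *)

theory Defs
  imports "HOL-Probability.Probability"
begin

text \<open>Extended expectation of a real random variable, with values in ereal:
  E[f] = int^+ f^+ - int^+ f^-.  (Only used for u(X) with X integrable and u convex
  increasing, where the negative part has finite integral.)\<close>
definition ext_expect :: "'w measure \<Rightarrow> ('w \<Rightarrow> real) \<Rightarrow> ereal" where
  "ext_expect M f =
     enn2ereal (\<integral>\<^sup>+ \<omega>. ennreal (f \<omega>) \<partial>M) - enn2ereal (\<integral>\<^sup>+ \<omega>. ennreal (- f \<omega>) \<partial>M)"

definition stoch_opt :: "'w measure \<Rightarrow> ('w \<Rightarrow> real) \<Rightarrow> ('w \<Rightarrow> real) \<Rightarrow> bool" where
  "stoch_opt M X Y \<longleftrightarrow>
     X \<in> borel_measurable M \<and> Y \<in> borel_measurable M \<and> integrable M X \<and> integrable M Y \<and>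
     (\<forall>u :: real \<Rightarrow> real. convex_on UNIV u \<and> mono u \<longrightarrow>
         ext_expect M (u \<circ> X) \<ge> ext_expect M (u \<circ> Y))"

text \<open>Data D_{l-1}(t,x,a): multiset of outcomes (r^k_{t+1}, x^k_{t+1}) over episodes
  1 <= k < l with x^k_t = x and a^k_t = a.  hx k t = x^k_t, ha k t = a^k_t, hr k t = r^k_t.\<close>
definition hist_data ::
  "(nat \<Rightarrow> nat \<Rightarrow> 'x) \<Rightarrow> (nat \<Rightarrow> nat \<Rightarrow> 'a) \<Rightarrow> (nat \<Rightarrow> nat \<Rightarrow> real) \<Rightarrow> nat
     \<Rightarrow> nat \<Rightarrow> 'x \<Rightarrow> 'a \<Rightarrow> (real \<times> 'x) multiset" where
  "hist_data hx ha hr l t x a =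
     mset (map (\<lambda>k. (hr k (Suc t), hx k (Suc t))) (filter (\<lambda>k. hx k t = x \<and> ha k t = a) [1..<l]))"

definition rlsvi_sigma2 :: "real \<Rightarrow> real \<Rightarrow> nat \<Rightarrow> real" where
  "rlsvi_sigma2 lam v n = inverse (1 / lam + real n / v)"

definition rlsvi_F ::
  "real \<Rightarrow> real \<Rightarrow> (nat \<Rightarrow> 'x \<Rightarrow> 'a::finite \<Rightarrow> real) \<Rightarrow> (nat \<Rightarrow> 'x \<Rightarrow> 'a \<Rightarrow> (real \<times> 'x) multiset)
     \<Rightarrow> (nat \<Rightarrow> 'x \<Rightarrow> 'a \<Rightarrow> real) \<Rightarrow> nat \<Rightarrow> ('x \<Rightarrow> 'a \<Rightarrow> real) \<Rightarrow> 'x \<Rightarrow> 'a \<Rightarrow> real" where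
  "rlsvi_F lam v th D wv t Q x a =
     rlsvi_sigma2 lam v (size (D t x a)) *
       (th t x a / lam + (1 / v) * sum_mset (image_mset (\<lambda>(r, x'). r + Max (range (Q x'))) (D t x a)))
     + wv t x a"

end

theory Submission
  imports Defs
begin

text \<open>For fixed \<open>t, x, a\<close> the update \<open>F Q (x, a) = \<alpha> + \<beta> \<Sum>\<^bsub>(r, x') \<in> D\<^esub> (r + max\<^sub>b Q (x', b)) + w (t, x, a)\<close>
  with \<open>\<beta> \<ge> 0\<close> is a function of the independent coordinates \<open>Q (\<cdot>, \<cdot>)\<close> and \<open>w (\<cdot>, \<cdot>, \<cdot>)\<close> that
  is convex and increasing in each coordinate separately and grows at most linearly. Such a
  function inherits stochastic optimism from its coordinates. Replacing the law of a single
  coordinate by a stochastically larger one, with the others fixed, increases \<open>E u(F)\<close> for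
  every convex increasing \<open>u\<close>: by Fubini this reduces to the one-dimensional hypothesis, because
  \<open>u \<circ> F\<close> is again convex and increasing in that coordinate. Exchanging the coordinates one at a
  time gives the claim. The noise coordinates are compared with themselves, and the linear
  growth of \<open>F\<close> keeps the negative parts of all expectations finite.\<close>

section \<open>Extended expectations\<close>

lemma ext_expect_distr:
  assumes "T \<in> measurable M N" "h \<in> borel_measurable N"
  shows "ext_expect (distr M N T) h = ext_expect M (h \<circ> T)"
  unfolding ext_expect_def using assms
  by (subst (1 2) nn_integral_distr) (auto simp: comp_def)

lemma enn2ereal_diff_le_iff:
  fixes a b c d :: ennreal
  assumes "b < \<top>" "d < \<top>"
  shows "enn2ereal a - enn2ereal b \<le> enn2ereal c - enn2ereal d \<longleftrightarrow> a + d \<le> c + b"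
proof -
  have "enn2ereal a - enn2ereal b \<le> enn2ereal c - enn2ereal d \<longleftrightarrow>
        enn2ereal a + enn2ereal d \<le> enn2ereal c + enn2ereal b"
    using assms by (cases "enn2ereal a"; cases "enn2ereal b"; cases "enn2ereal c"; cases "enn2ereal d")
      (auto simp: less_top)
  also have "\<dots> \<longleftrightarrow> a + d \<le> c + b"
    by (simp flip: plus_ennreal.rep_eq add: less_eq_ennreal.rep_eq)
  finally show ?thesis .
qed

lemma nn_integral_neg_lt_top_of_minorant:
  fixes f g :: "'a \<Rightarrow> real"
  assumes "integrable M g" "\<And>x. - g x \<le> f x"
  shows "(\<integral>\<^sup>+x. ennreal (- f x) \<partial>M) < \<top>"
proof -
  have "(\<integral>\<^sup>+x. ennreal (- f x) \<partial>M) \<le> (\<integral>\<^sup>+x. ennreal (norm (g x)) \<partial>M)"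
    using assms(2) by (intro nn_integral_mono ennreal_leI) (smt (verit) real_norm_def)
  also have "\<dots> < \<top>"
    using assms(1) by (simp add: integrable_iff_bounded)
  finally show ?thesis .
qed

section \<open>Convex increasing functions\<close>

lemma convex_mono_ge_of_abs_le:
  fixes u :: "real \<Rightarrow> real"
  assumes "convex_on UNIV u" "mono u" "\<bar>s\<bar> \<le> c"
  shows "u (-1) - (u 0 - u (-1)) * c \<le> u s"
proof -
  have slope: "0 \<le> u 0 - u (-1)"
    using assms(2) by (simp add: monoD)
  have "u (-1) - (u 0 - u (-1)) * \<bar>s\<bar> \<le> u s"
  proof (cases "s \<ge> -1")
    case True
    then show ?thesis
      using monoD[OF assms(2) True] slope by (smt (verit) abs_ge_zero mult_nonneg_nonneg)
  next
    case False
    define \<theta> where "\<theta> = (s + 1) / s"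
    have \<theta>: "0 \<le> \<theta>" "\<theta> \<le> 1" "(1 - \<theta>) *\<^sub>R s + \<theta> *\<^sub>R 0 = -1"
      using False by (auto simp: \<theta>_def field_simps)
    \<comment> \<open>\<open>-1\<close> lies between \<open>s\<close> and \<open>0\<close>, so the chord through \<open>(s, u s)\<close> and
      \<open>(0, u 0)\<close> bounds \<open>u (-1)\<close>.\<close>
    have "u (-1) \<le> (1 - \<theta>) * u s + \<theta> * u 0"
      using convex_onD[OF assms(1) \<theta>(1,2), of s 0] \<theta>(3) by simp
    then have "(-s) * u (-1) \<le> (-s) * ((1 - \<theta>) * u s + \<theta> * u 0)"
      using False by (intro mult_left_mono) auto
    also have "\<dots> = u s + (-s - 1) * u 0"
      using False by (simp add: \<theta>_def field_simps)
    finally show ?thesis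
      using False slope by (simp add: algebra_simps)
  qed
  moreover have "(u 0 - u (-1)) * \<bar>s\<bar> \<le> (u 0 - u (-1)) * c"
    using assms(3) slope by (rule mult_left_mono)
  ultimately show ?thesis
    by simp
qed

lemma convex_on_borel_measurable:
  fixes h :: "real \<Rightarrow> real"
  assumes "convex_on UNIV h"
  shows "h \<in> borel_measurable borel"
  using convex_on_continuous[OF open_UNIV assms] by (rule borel_measurable_continuous_onI)

lemma convex_on_Max_range:
  fixes \<phi> :: "'b::finite \<Rightarrow> real \<Rightarrow> real"
  assumes "\<And>b. convex_on UNIV (\<phi> b)"
  shows "convex_on UNIV (\<lambda>y. Max (range (\<lambda>b. \<phi> b y)))"
proof (rule convex_onI)
  fix t x y :: real assume t: "0 < t" "t < 1"
  show "Max (range (\<lambda>b. \<phi> b ((1 - t) *\<^sub>R x + t *\<^sub>R y)))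
        \<le> (1 - t) * Max (range (\<lambda>b. \<phi> b x)) + t * Max (range (\<lambda>b. \<phi> b y))"
  proof (rule Max.boundedI)
    fix z assume "z \<in> range (\<lambda>b. \<phi> b ((1 - t) *\<^sub>R x + t *\<^sub>R y))"
    then obtain b where z: "z = \<phi> b ((1 - t) *\<^sub>R x + t *\<^sub>R y)" by auto
    have "z \<le> (1 - t) * \<phi> b x + t * \<phi> b y"
      using convex_onD[OF assms[of b], of t x y] t z by simp
    also have "\<dots> \<le> (1 - t) * Max (range (\<lambda>b. \<phi> b x)) + t * Max (range (\<lambda>b. \<phi> b y))"
      using t by (intro add_mono mult_left_mono Max_ge) auto
    finally show "z \<le> \<dots>" .
  qed auto
qed simp

lemma mono_Max_range:
  fixes \<phi> :: "'b::finite \<Rightarrow> real \<Rightarrow> real"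
  assumes "\<And>b. mono (\<phi> b)"
  shows "mono (\<lambda>y. Max (range (\<lambda>b. \<phi> b y)))"
proof (rule monoI, rule Max.boundedI)
  fix x y z :: real assume "x \<le> y" "z \<in> range (\<lambda>b. \<phi> b x)"
  then show "z \<le> Max (range (\<lambda>b. \<phi> b y))"
    using assms by (auto intro: order_trans[OF monoD] Max_ge)
qed auto

lemma convex_on_comp_mono:
  fixes u g :: "real \<Rightarrow> real"
  assumes "convex_on UNIV u" "mono u" "convex_on UNIV g"
  shows "convex_on UNIV (u \<circ> g)"
proof (rule convex_onI)
  fix t x y :: real assume t: "0 < t" "t < 1"
  have "g ((1 - t) *\<^sub>R x + t *\<^sub>R y) \<le> (1 - t) * g x + t * g y"
    using convex_onD[OF assms(3), of t x y] t by simp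
  then have "u (g ((1 - t) *\<^sub>R x + t *\<^sub>R y)) \<le> u ((1 - t) *\<^sub>R g x + t *\<^sub>R g y)"
    using assms(2) by (simp add: monoD)
  also have "\<dots> \<le> (1 - t) * u (g x) + t * u (g y)"
    using convex_onD[OF assms(1), of t "g x" "g y"] t by simp
  finally show "(u \<circ> g) ((1 - t) *\<^sub>R x + t *\<^sub>R y) \<le> (1 - t) * (u \<circ> g) x + t * (u \<circ> g) y"
    by simp
qed simp

lemma convex_on_sum_mset:
  fixes g :: "'b \<Rightarrow> real \<Rightarrow> real"
  assumes "\<And>q. q \<in># D \<Longrightarrow> convex_on UNIV (g q)"
  shows "convex_on UNIV (\<lambda>y. \<Sum>q\<in>#D. g q y)"
  using assms by (induction D) (auto simp: convex_on_const)

lemma mono_sum_mset: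
  fixes g :: "'b \<Rightarrow> real \<Rightarrow> real"
  assumes "\<And>q. q \<in># D \<Longrightarrow> mono (g q)"
  shows "mono (\<lambda>y. \<Sum>q\<in>#D. g q y)"
  using assms by (auto simp: mono_def intro!: sum_mset_mono)

lemma convex_on_fun_upd_apply: "convex_on UNIV (\<lambda>y::real. (z(k := y)) q)"
  by (cases "k = q") (simp_all add: convex_on_const convex_on_ident)

lemma mono_fun_upd_apply: "mono (\<lambda>y::real. (z(k := y)) q)"
  by (cases "k = q") (simp_all add: monoI)

section \<open>Products of real distributions\<close>

lemma measurable_PiM_cong_sets_borel:
  assumes "f \<in> borel_measurable (PiM J (\<lambda>_. borel))" "\<And>k. sets (A k) = sets borel"
  shows "f \<in> borel_measurable (PiM J A)"
proof -
  have "sets (PiM J A) = sets (PiM J (\<lambda>_. borel))"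
    by (rule sets_PiM_cong) (auto simp: assms(2))
  then show ?thesis
    using assms(1) by (subst measurable_cong_sets[OF _ refl])
qed

lemma integrable_PiM_component:
  assumes "\<And>k. prob_space (A k)" "\<And>k. sets (A k) = sets borel" "k \<in> J"
    "integrable (A k) (\<lambda>y. y)"
  shows "integrable (PiM J A) (\<lambda>z. z k :: real)"
proof -
  have "(\<lambda>z. z k) \<in> measurable (PiM J A) (A k)"
    using assms(3) by simp
  moreover have "integrable (distr (PiM J A) (A k) (\<lambda>z. z k)) (\<lambda>y. y)"
    using assms by (subst distr_PiM_component) auto
  ultimately show ?thesis
    by (rule integrable_distr)
qed

lemma integrable_PiM_linear_growth:
  assumes "finite J" "\<And>k. prob_space (A k)" "\<And>k. sets (A k) = sets borel"
    "\<And>k. k \<in> J \<Longrightarrow> integrable (A k) (\<lambda>y. y)"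
  shows "integrable (PiM J A) (\<lambda>z. C + K * (\<Sum>k\<in>J. \<bar>z k :: real\<bar>))"
proof -
  interpret prob_space "PiM J A"
    by (rule prob_space_PiM) (simp add: assms(2))
  have "integrable (PiM J A) (\<lambda>z. \<bar>z k\<bar>)" if "k \<in> J" for k
    using integrable_PiM_component[of A, OF assms(2,3) that assms(4)[OF that]] by (rule integrable_abs)
  then show ?thesis
    by (intro Bochner_Integration.integrable_add integrable_mult_right
        Bochner_Integration.integrable_sum) auto
qed

lemma (in product_sigma_finite) borel_measurable_nn_integral_slice:
  assumes "g \<in> borel_measurable (PiM (insert i I) M)"
  shows "(\<lambda>x. \<integral>\<^sup>+y. g (x(i := y)) \<partial>M i) \<in> borel_measurable (PiM I M)"
proof -
  have "(\<lambda>(x, y). g (x(i := y))) \<in> borel_measurable (PiM I M \<Otimes>\<^sub>M M i)"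
    using measurable_comp[OF measurable_add_dim assms] by (simp add: comp_def case_prod_beta)
  then show ?thesis
    using sigma_finite_measure.borel_measurable_nn_integral[OF sigma_finite_measures] by simp
qed

lemma nn_integral_PiM_insert_slice:
  fixes D :: "'i \<Rightarrow> real measure" and g :: "('i \<Rightarrow> real) \<Rightarrow> real"
  assumes D: "\<And>k. prob_space (D k)" "\<And>k. sets (D k) = sets borel"
    and I: "finite I" "i \<notin> I" and g: "g \<in> borel_measurable (PiM (insert i I) (\<lambda>_. borel))"
  shows "(\<integral>\<^sup>+z. ennreal (g z) \<partial>PiM (insert i I) D) = (\<integral>\<^sup>+x. (\<integral>\<^sup>+y. ennreal (g (x(i := y))) \<partial>D i) \<partial>PiM I D)"
    and "(\<lambda>x. \<integral>\<^sup>+y. ennreal (g (x(i := y))) \<partial>D i) \<in> borel_measurable (PiM I D)"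
proof -
  interpret product_sigma_finite D
    unfolding product_sigma_finite_def by (simp add: D(1) prob_space_imp_sigma_finite)
  have "(\<lambda>z. ennreal (g z)) \<in> borel_measurable (PiM (insert i I) D)"
    using measurable_PiM_cong_sets_borel[OF g D(2)] by simp
  then show "(\<integral>\<^sup>+z. ennreal (g z) \<partial>PiM (insert i I) D) = (\<integral>\<^sup>+x. (\<integral>\<^sup>+y. ennreal (g (x(i := y))) \<partial>D i) \<partial>PiM I D)"
    and "(\<lambda>x. \<integral>\<^sup>+y. ennreal (g (x(i := y))) \<partial>D i) \<in> borel_measurable (PiM I D)"
    by (simp_all add: product_nn_integral_insert I borel_measurable_nn_integral_slice)
qed

lemma nn_integral_neg_slice_lt_top:
  fixes f :: "('i \<Rightarrow> real) \<Rightarrow> real"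
  assumes "prob_space N" "integrable N (\<lambda>y. y)" "finite J" "i \<in> J"
    and "\<And>z. - (C + K * (\<Sum>k\<in>J. \<bar>z k\<bar>)) \<le> f z"
  shows "(\<integral>\<^sup>+y. ennreal (- f (x(i := y))) \<partial>N) < \<top>"
proof (rule nn_integral_neg_lt_top_of_minorant)
  interpret prob_space N by fact
  show "integrable N (\<lambda>y. C + K * (\<Sum>k\<in>J - {i}. \<bar>x k\<bar>) + K * \<bar>y\<bar>)"
    using assms(2) by (intro Bochner_Integration.integrable_add integrable_mult_right integrable_abs) auto
  fix y
  have "(\<Sum>k\<in>J. \<bar>(x(i := y)) k\<bar>) = \<bar>y\<bar> + (\<Sum>k\<in>J - {i}. \<bar>x k\<bar>)"
    using assms(3,4) by (simp add: sum.remove)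
  then show "- (C + K * (\<Sum>k\<in>J - {i}. \<bar>x k\<bar>) + K * \<bar>y\<bar>) \<le> f (x(i := y))"
    using assms(5)[of "x(i := y)"] by (simp add: algebra_simps)
qed

text \<open>Fubini reduces the comparison to the slices through coordinate \<open>i\<close>, where it is the
  hypothesis on \<open>A i\<close> and \<open>B i\<close>. As \<open>ext_expect\<close> is a difference of integrals, the slice
  comparisons are integrated in the subtraction-free form \<open>p\<^sub>B + n\<^sub>A \<le> p\<^sub>A + n\<^sub>B\<close> of
  positive and negative parts, which the linear lower bound keeps finite.\<close>
lemma ext_expect_PiM_le_update:
  fixes A B :: "'i \<Rightarrow> real measure" and f :: "('i \<Rightarrow> real) \<Rightarrow> real"
  assumes J: "finite J" "i \<in> J"
    and pA: "\<And>k. prob_space (A k)" and sA: "\<And>k. sets (A k) = sets borel"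
    and pB: "\<And>k. prob_space (B k)" and sB: "\<And>k. sets (B k) = sets borel"
    and AB: "\<And>k. k \<noteq> i \<Longrightarrow> A k = B k"
    and iA: "\<And>k. k \<in> J \<Longrightarrow> integrable (A k) (\<lambda>y. y)"
    and iB: "\<And>k. k \<in> J \<Longrightarrow> integrable (B k) (\<lambda>y. y)"
    and icx: "\<And>h. convex_on UNIV h \<Longrightarrow> mono h \<Longrightarrow> ext_expect (B i) h \<le> ext_expect (A i) h"
    and fm: "f \<in> borel_measurable (PiM J (\<lambda>_. borel))"
    and fc: "\<And>z. convex_on UNIV (\<lambda>y. f (z(i := y)))" "\<And>z. mono (\<lambda>y. f (z(i := y)))"
    and fb: "\<And>z. - (C + K * (\<Sum>k\<in>J. \<bar>z k\<bar>)) \<le> f z"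
  shows "ext_expect (PiM J B) f \<le> ext_expect (PiM J A) f"
proof -
  define I where "I = J - {i}"
  have I: "J = insert i I" "finite I" "i \<notin> I"
    using J by (auto simp: I_def)
  have PiM_I: "PiM I B = PiM I A"
    using I(3) by (intro PiM_cong refl AB[symmetric]) auto
  define slice where "slice N g x = (\<integral>\<^sup>+y. ennreal (g (x(i := y))) \<partial>N)"
    for N :: "real measure" and g :: "('i \<Rightarrow> real) \<Rightarrow> real" and x
  have fm': "(\<lambda>z. - f z) \<in> borel_measurable (PiM J (\<lambda>_. borel))"
    using fm by simp
  note A_slices = nn_integral_PiM_insert_slice[where D=A, OF pA sA I(2,3), folded I(1) slice_def]
  note B_slices = nn_integral_PiM_insert_slice[where D=B, OF pB sB I(2,3), folded I(1) slice_def, unfolded PiM_I]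
  have slices: "slice (B i) f x + slice (A i) (\<lambda>z. - f z) x
      \<le> slice (A i) f x + slice (B i) (\<lambda>z. - f z) x" for x
  proof -
    have "ext_expect (B i) (\<lambda>y. f (x(i := y))) \<le> ext_expect (A i) (\<lambda>y. f (x(i := y)))"
      using icx[OF fc(1)[of x] fc(2)[of x]] .
    moreover have "enn2ereal (slice (B i) f x) - enn2ereal (slice (B i) (\<lambda>z. - f z) x)
        \<le> enn2ereal (slice (A i) f x) - enn2ereal (slice (A i) (\<lambda>z. - f z) x) \<longleftrightarrow> ?thesis"
      unfolding slice_def
      by (intro enn2ereal_diff_le_iff nn_integral_neg_slice_lt_top[OF _ _ J fb] pA pB iA iB J)
    ultimately show ?thesis
      unfolding ext_expect_def slice_def by simp
  qed
  have "(\<integral>\<^sup>+z. ennreal (f z) \<partial>PiM J B) + (\<integral>\<^sup>+z. ennreal (- f z) \<partial>PiM J A)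
      = (\<integral>\<^sup>+x. slice (B i) f x + slice (A i) (\<lambda>z. - f z) x \<partial>PiM I A)"
    using A_slices[OF fm'] B_slices[OF fm] by (simp add: nn_integral_add)
  also have "\<dots> \<le> (\<integral>\<^sup>+x. slice (A i) f x + slice (B i) (\<lambda>z. - f z) x \<partial>PiM I A)"
    using slices by (rule nn_integral_mono)
  also have "\<dots> = (\<integral>\<^sup>+z. ennreal (f z) \<partial>PiM J A) + (\<integral>\<^sup>+z. ennreal (- f z) \<partial>PiM J B)"
    using A_slices[OF fm] B_slices[OF fm'] by (simp add: nn_integral_add)
  finally have sums: "(\<integral>\<^sup>+z. ennreal (f z) \<partial>PiM J B) + (\<integral>\<^sup>+z. ennreal (- f z) \<partial>PiM J A)
      \<le> (\<integral>\<^sup>+z. ennreal (f z) \<partial>PiM J A) + (\<integral>\<^sup>+z. ennreal (- f z) \<partial>PiM J B)" .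
  have neg_finite: "(\<integral>\<^sup>+z. ennreal (- f z) \<partial>PiM J D) < \<top>"
    if "\<And>k. prob_space (D k)" "\<And>k. sets (D k) = sets borel" "\<And>k. k \<in> J \<Longrightarrow> integrable (D k) (\<lambda>y. y)"
    for D
    using integrable_PiM_linear_growth[OF J(1) that] fb by (rule nn_integral_neg_lt_top_of_minorant)
  have "ext_expect (PiM J B) f \<le> ext_expect (PiM J A) f \<longleftrightarrow>
      (\<integral>\<^sup>+z. ennreal (f z) \<partial>PiM J B) + (\<integral>\<^sup>+z. ennreal (- f z) \<partial>PiM J A)
      \<le> (\<integral>\<^sup>+z. ennreal (f z) \<partial>PiM J A) + (\<integral>\<^sup>+z. ennreal (- f z) \<partial>PiM J B)"
    unfolding ext_expect_def by (rule enn2ereal_diff_le_iff[OF neg_finite[OF pB sB iB] neg_finite[OF pA sA iA]])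
  with sums show ?thesis
    by blast
qed

lemma ext_expect_PiM_le:
  fixes \<mu> \<nu> :: "'i \<Rightarrow> real measure" and f :: "('i \<Rightarrow> real) \<Rightarrow> real"
  assumes J: "finite J"
    and p\<mu>: "\<And>k. prob_space (\<mu> k)" and s\<mu>: "\<And>k. sets (\<mu> k) = sets borel"
    and p\<nu>: "\<And>k. prob_space (\<nu> k)" and s\<nu>: "\<And>k. sets (\<nu> k) = sets borel"
    and i\<mu>: "\<And>k. k \<in> J \<Longrightarrow> integrable (\<mu> k) (\<lambda>y. y)"
    and i\<nu>: "\<And>k. k \<in> J \<Longrightarrow> integrable (\<nu> k) (\<lambda>y. y)"
    and icx: "\<And>k h. k \<in> J \<Longrightarrow> convex_on UNIV h \<Longrightarrow> mono h \<Longrightarrow> ext_expect (\<nu> k) h \<le> ext_expect (\<mu> k) h"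
    and fm: "f \<in> borel_measurable (PiM J (\<lambda>_. borel))"
    and fc: "\<And>z i. convex_on UNIV (\<lambda>y. f (z(i := y)))" "\<And>z i. mono (\<lambda>y. f (z(i := y)))"
    and fb: "\<And>z. - (C + K * (\<Sum>k\<in>J. \<bar>z k\<bar>)) \<le> f z"
  shows "ext_expect (PiM J \<nu>) f \<le> ext_expect (PiM J \<mu>) f"
proof -
  define mix where "mix S k = (if k \<in> S then \<mu> k else \<nu> k)" for S k
  have pm: "prob_space (mix S k)" and sm: "sets (mix S k) = sets borel" for S k
    by (simp_all add: mix_def p\<mu> p\<nu> s\<mu> s\<nu>)
  have im: "integrable (mix S k) (\<lambda>y. y)" if "k \<in> J" for S k
    using that by (simp add: mix_def i\<mu> i\<nu>)
  have "ext_expect (PiM J \<nu>) f \<le> ext_expect (PiM J (mix S)) f" if "finite S" "S \<subseteq> J" for S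
    using that
  proof (induction S rule: finite_induct)
    case empty
    then show ?case by (simp add: mix_def)
  next
    case (insert i S)
    have "ext_expect (PiM J (mix S)) f \<le> ext_expect (PiM J (mix (insert i S))) f"
    proof (rule ext_expect_PiM_le_update[OF J _ pm sm pm sm _ im im _ fm fc fb])
      show "i \<in> J"
        using insert by auto
      show "\<And>k. k \<noteq> i \<Longrightarrow> mix (insert i S) k = mix S k"
        by (simp add: mix_def)
      show "\<And>h. convex_on UNIV h \<Longrightarrow> mono h \<Longrightarrow> ext_expect (mix S i) h \<le> ext_expect (mix (insert i S) i) h"
        using insert icx by (simp add: mix_def)
    qed
    then show ?case
      using insert by (meson insert_subset order_trans)
  qed
  moreover have "PiM J (mix J) = PiM J \<mu>"
    by (rule PiM_cong) (simp_all add: mix_def)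
  ultimately show ?thesis
    using J by (metis order_refl)
qed

lemma ext_expect_PiM_comp_le:
  fixes \<mu> \<nu> :: "'i \<Rightarrow> real measure" and G :: "('i \<Rightarrow> real) \<Rightarrow> real" and u :: "real \<Rightarrow> real"
  assumes J: "finite J"
    and p\<mu>: "\<And>k. prob_space (\<mu> k)" and s\<mu>: "\<And>k. sets (\<mu> k) = sets borel"
    and p\<nu>: "\<And>k. prob_space (\<nu> k)" and s\<nu>: "\<And>k. sets (\<nu> k) = sets borel"
    and i\<mu>: "\<And>k. k \<in> J \<Longrightarrow> integrable (\<mu> k) (\<lambda>y. y)"
    and i\<nu>: "\<And>k. k \<in> J \<Longrightarrow> integrable (\<nu> k) (\<lambda>y. y)"
    and icx: "\<And>k h. k \<in> J \<Longrightarrow> convex_on UNIV h \<Longrightarrow> mono h \<Longrightarrow> ext_expect (\<nu> k) h \<le> ext_expect (\<mu> k) h"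
    and G: "G \<in> borel_measurable (PiM J (\<lambda>_. borel))"
    and convex: "\<And>z i. convex_on UNIV (\<lambda>y. G (z(i := y)))"
    and mono: "\<And>z i. mono (\<lambda>y. G (z(i := y)))"
    and growth: "\<And>z. \<bar>G z\<bar> \<le> C + K * (\<Sum>k\<in>J. \<bar>z k\<bar>)"
    and u: "convex_on UNIV u" "mono u"
  shows "ext_expect (PiM J \<nu>) (u \<circ> G) \<le> ext_expect (PiM J \<mu>) (u \<circ> G)"
proof (rule ext_expect_PiM_le[OF J p\<mu> s\<mu> p\<nu> s\<nu> i\<mu> i\<nu> icx])
  show "u \<circ> G \<in> borel_measurable (PiM J (\<lambda>_. borel))"
    using measurable_comp[OF G convex_on_borel_measurable[OF u(1)]] .
  show "convex_on UNIV (\<lambda>y. (u \<circ> G) (z(k := y)))" "mono (\<lambda>y. (u \<circ> G) (z(k := y)))" for z k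
    using convex_on_comp_mono[OF u convex[of z k]] u(2) mono[of z k] by (auto simp: comp_def mono_def)
  show "- ((C * (u 0 - u (-1)) - u (-1)) + K * (u 0 - u (-1)) * (\<Sum>k\<in>J. \<bar>z k\<bar>)) \<le> (u \<circ> G) z" for z
    using convex_mono_ge_of_abs_le[OF u growth[of z]] by (simp add: algebra_simps)
qed

section \<open>Stochastic optimism of coordinatewise convex functions\<close>

lemma stoch_opt_refl:
  assumes "X \<in> borel_measurable M" "integrable M X"
  shows "stoch_opt M X X"
  using assms by (simp add: stoch_opt_def)

lemma borel_measurable_comp_coordinates:
  assumes "\<And>i. i \<in> J \<Longrightarrow> X i \<in> borel_measurable M"
    and "G \<in> borel_measurable (PiM J (\<lambda>_. borel))" "\<And>z. G (restrict z J) = G z"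
  shows "(\<lambda>\<omega>. G (\<lambda>i. X i \<omega>)) \<in> borel_measurable M"
proof -
  have "(\<lambda>\<omega>. G (\<lambda>i\<in>J. X i \<omega>)) \<in> borel_measurable M"
    using measurable_comp[OF measurable_restrict[OF assms(1)] assms(2)] by (simp add: comp_def)
  then show ?thesis
    by (simp add: assms(3))
qed

lemma integrable_comp_linear_growth:
  fixes X :: "'i \<Rightarrow> 'w \<Rightarrow> real"
  assumes "finite J" "\<And>i. i \<in> J \<Longrightarrow> X i \<in> borel_measurable M" "\<And>i. i \<in> J \<Longrightarrow> integrable M (X i)"
    and "G \<in> borel_measurable (PiM J (\<lambda>_. borel))" "\<And>z. G (restrict z J) = G z"
    and "\<And>z. \<bar>G z\<bar> \<le> C + K * (\<Sum>k\<in>J. \<bar>z k\<bar>)"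
    and "prob_space M"
  shows "integrable M (\<lambda>\<omega>. G (\<lambda>i. X i \<omega>))"
proof (rule Bochner_Integration.integrable_bound)
  interpret prob_space M by fact
  show "integrable M (\<lambda>\<omega>. C + K * (\<Sum>k\<in>J. \<bar>X k \<omega>\<bar>))"
    using assms(3) by (intro Bochner_Integration.integrable_add integrable_mult_right
        Bochner_Integration.integrable_sum integrable_abs) auto
  show "(\<lambda>\<omega>. G (\<lambda>i. X i \<omega>)) \<in> borel_measurable M"
    using assms(2,4,5) by (rule borel_measurable_comp_coordinates)
  show "AE \<omega> in M. norm (G (\<lambda>i. X i \<omega>)) \<le> norm (C + K * (\<Sum>k\<in>J. \<bar>X k \<omega>\<bar>))"
    using assms(6) by (intro AE_I2) (auto intro: order_trans[OF _ abs_ge_self])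
qed

lemma (in prob_space) ext_expect_indep_vars:
  assumes "J \<noteq> {}" "\<And>i. i \<in> J \<Longrightarrow> X i \<in> borel_measurable M" "indep_vars (\<lambda>_. borel) X J"
    and "h \<in> borel_measurable (PiM J (\<lambda>_. borel))" "\<And>z. h (restrict z J) = h z"
  shows "ext_expect M (\<lambda>\<omega>. h (\<lambda>i. X i \<omega>)) = ext_expect (PiM J (\<lambda>i. distr M borel (X i))) h"
proof -
  have X: "(\<lambda>\<omega>. \<lambda>i\<in>J. X i \<omega>) \<in> measurable M (PiM J (\<lambda>_. borel))"
    by (intro measurable_restrict assms(2))
  have "distr M (PiM J (\<lambda>_. borel)) (\<lambda>\<omega>. \<lambda>i\<in>J. X i \<omega>) = PiM J (\<lambda>i. distr M borel (X i))"
    using indep_vars_iff_distr_eq_PiM'[OF assms(1), where M'="\<lambda>_. borel" and X=X] assms(2,3) by simp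
  then show ?thesis
    using ext_expect_distr[OF X assms(4)] by (simp add: comp_def assms(5))
qed

theorem stoch_opt_indep_coordinatewise_convex:
  fixes X Y :: "'i \<Rightarrow> 'w \<Rightarrow> real" and G :: "('i \<Rightarrow> real) \<Rightarrow> real"
  assumes M: "prob_space M" and J: "finite J" "J \<noteq> {}"
    and indep: "prob_space.indep_vars M (\<lambda>_. borel) X J" "prob_space.indep_vars M (\<lambda>_. borel) Y J"
    and SO: "\<And>i. i \<in> J \<Longrightarrow> stoch_opt M (X i) (Y i)"
    and G: "G \<in> borel_measurable (PiM J (\<lambda>_. borel))" "\<And>z. G (restrict z J) = G z"
    and convex: "\<And>z i. convex_on UNIV (\<lambda>y. G (z(i := y)))"
    and mono: "\<And>z i. mono (\<lambda>y. G (z(i := y)))"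
    and growth: "\<And>z. \<bar>G z\<bar> \<le> C + K * (\<Sum>k\<in>J. \<bar>z k\<bar>)"
  shows "stoch_opt M (\<lambda>\<omega>. G (\<lambda>i. X i \<omega>)) (\<lambda>\<omega>. G (\<lambda>i. Y i \<omega>))"
proof -
  interpret prob_space M by fact
  \<comment> \<open>Outside \<open>J\<close> the factors never matter; the Dirac measure just makes each one a
    probability space.\<close>
  define law where "law Z i = (if i \<in> J then distr M borel (Z i) else return borel 0)"
    for Z :: "'i \<Rightarrow> 'w \<Rightarrow> real" and i
  have law: "prob_space (law Z k)" "sets (law Z k) = sets borel"
    "k \<in> J \<Longrightarrow> integrable (law Z k) (\<lambda>y. y)" "PiM J (law Z) = PiM J (\<lambda>i. distr M borel (Z i))"
    if "\<And>i. i \<in> J \<Longrightarrow> Z i \<in> borel_measurable M" "\<And>i. i \<in> J \<Longrightarrow> integrable M (Z i)" for Z k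
    using that by (auto simp: law_def prob_space_distr prob_space_return integrable_distr_eq intro: PiM_cong)
  have X: "X i \<in> borel_measurable M" "integrable M (X i)"
    and Y: "Y i \<in> borel_measurable M" "integrable M (Y i)" if "i \<in> J" for i
    using SO[OF that] by (simp_all add: stoch_opt_def)
  have law_icx: "ext_expect (law Y k) h \<le> ext_expect (law X k) h"
    if "k \<in> J" "convex_on UNIV h" "mono h" for k h
    using SO[OF that(1)] that X[OF that(1)] Y[OF that(1)]
    by (simp add: law_def stoch_opt_def ext_expect_distr convex_on_borel_measurable)
  have law_ext_expect: "ext_expect M (u \<circ> (\<lambda>\<omega>. G (\<lambda>i. Z i \<omega>))) = ext_expect (PiM J (law Z)) (u \<circ> G)"
    if "convex_on UNIV u" "\<And>i. i \<in> J \<Longrightarrow> Z i \<in> borel_measurable M"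
      "\<And>i. i \<in> J \<Longrightarrow> integrable M (Z i)" "indep_vars (\<lambda>_. borel) Z J" for u Z
  proof -
    have "u \<circ> G \<in> borel_measurable (PiM J (\<lambda>_. borel))"
      using measurable_comp[OF G(1) convex_on_borel_measurable[OF that(1)]] .
    then show ?thesis
      using ext_expect_indep_vars[where h="u \<circ> G", OF J(2) that(2,4)] G(2) law(4)[OF that(2,3)]
      by (simp add: comp_def)
  qed
  note lawX = law[of X, OF X] and lawY = law[of Y, OF Y]
  show ?thesis
    unfolding stoch_opt_def
  proof (intro conjI allI impI)
    show "(\<lambda>\<omega>. G (\<lambda>i. X i \<omega>)) \<in> borel_measurable M"
      by (rule borel_measurable_comp_coordinates[where G=G and J=J, OF _ G]) (rule X)
    show "(\<lambda>\<omega>. G (\<lambda>i. Y i \<omega>)) \<in> borel_measurable M"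
      by (rule borel_measurable_comp_coordinates[where G=G and J=J, OF _ G]) (rule Y)
    show "integrable M (\<lambda>\<omega>. G (\<lambda>i. X i \<omega>))"
      by (rule integrable_comp_linear_growth[where G=G, OF J(1) _ _ G growth M]) (rule X; assumption)+
    show "integrable M (\<lambda>\<omega>. G (\<lambda>i. Y i \<omega>))"
      by (rule integrable_comp_linear_growth[where G=G, OF J(1) _ _ G growth M]) (rule Y; assumption)+
    fix u :: "real \<Rightarrow> real" assume u: "convex_on UNIV u \<and> mono u"
    then have "ext_expect (PiM J (law Y)) (u \<circ> G) \<le> ext_expect (PiM J (law X)) (u \<circ> G)"
      by (intro ext_expect_PiM_comp_le[OF J(1) lawX(1,2) lawY(1,2) lawX(3) lawY(3) law_icx G(1)
          convex mono growth]) simp_all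
    then show "ext_expect M (u \<circ> (\<lambda>\<omega>. G (\<lambda>i. Y i \<omega>))) \<le> ext_expect M (u \<circ> (\<lambda>\<omega>. G (\<lambda>i. X i \<omega>)))"
      using law_ext_expect X Y indep u by simp
  qed
qed

section \<open>The RLSVI Bellman operator\<close>

lemma distributed_normal_integrable:
  assumes "distributed M lborel X (\<lambda>x. ennreal (normal_density \<mu> \<sigma> x))" "0 < \<sigma>"
  shows "X \<in> borel_measurable M" "integrable M X"
proof -
  have "X \<in> measurable M lborel"
    using assms(1) by (rule distributed_measurable)
  then show "X \<in> borel_measurable M"
    by (simp add: measurable_cong_sets[OF refl sets_lborel])
  show "integrable M X"
    using assms by (intro distributed_integrable_var[OF assms(1)] integrable_normal_moment_nz_1) auto
qed

lemma borel_measurable_sum_mset: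
  fixes f :: "'b \<Rightarrow> 'a \<Rightarrow> real"
  assumes "\<And>q. q \<in># D \<Longrightarrow> f q \<in> borel_measurable M"
  shows "(\<lambda>z. \<Sum>q\<in>#D. f q z) \<in> borel_measurable M"
  using assms by (induction D) auto

text \<open>The Bellman update as a function of one vector \<open>z\<close> of coordinates: \<open>z (Inl (x, a))\<close>
  is the entry \<open>Q(x, a)\<close> and \<open>z (Inr p)\<close> is the noise term at index \<open>p\<close>.\<close>
definition rlsvi_F_coords ::
  "real \<Rightarrow> real \<Rightarrow> (real \<times> 'x) multiset \<Rightarrow> 'p \<Rightarrow> ('x \<times> 'a::finite + 'p \<Rightarrow> real) \<Rightarrow> real" where
  "rlsvi_F_coords \<alpha> \<beta> D p z =
     \<alpha> + \<beta> * (\<Sum>(r, x')\<in>#D. r + Max (range (\<lambda>b. z (Inl (x', b))))) + z (Inr p)"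

lemma rlsvi_F_eq_coords:
  "rlsvi_F lam v th D wv t Q x a =
     rlsvi_F_coords (rlsvi_sigma2 lam v (size (D t x a)) * (th t x a / lam))
       (rlsvi_sigma2 lam v (size (D t x a)) / v) (D t x a) (t, x, a)
       (\<lambda>i. case i of Inl (x, a) \<Rightarrow> Q x a | Inr (t, x, a) \<Rightarrow> wv t x a)"
  unfolding rlsvi_F_def rlsvi_F_coords_def
  by (simp add: algebra_simps)

lemma convex_on_rlsvi_F_coords:
  assumes "0 \<le> \<beta>"
  shows "convex_on UNIV (\<lambda>y. rlsvi_F_coords \<alpha> \<beta> D p (z(k := y)))"
proof -
  have "convex_on UNIV (\<lambda>y. r + Max (range (\<lambda>b. (z(k := y)) (Inl (x', b)))))" for r x'
    by (intro convex_on_add convex_on_Max_range convex_on_fun_upd_apply) (simp add: convex_on_const)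
  then have "convex_on UNIV (\<lambda>y. \<Sum>(r, x')\<in>#D. r + Max (range (\<lambda>b. (z(k := y)) (Inl (x', b)))))"
    by (intro convex_on_sum_mset) (simp add: case_prod_beta)
  then show ?thesis
    unfolding rlsvi_F_coords_def using assms
    by (intro convex_on_add convex_on_cmul convex_on_fun_upd_apply) (simp_all add: convex_on_const)
qed

lemma mono_rlsvi_F_coords:
  assumes "0 \<le> \<beta>"
  shows "mono (\<lambda>y. rlsvi_F_coords \<alpha> \<beta> D p (z(k := y)))"
proof -
  have "mono (\<lambda>y. r + Max (range (\<lambda>b. (z(k := y)) (Inl (x', b)))))" for r x'
    using mono_Max_range[of "\<lambda>b y. (z(k := y)) (Inl (x', b))", OF mono_fun_upd_apply]
    by (simp add: mono_def)
  then have "mono (\<lambda>y. \<Sum>(r, x')\<in>#D. r + Max (range (\<lambda>b. (z(k := y)) (Inl (x', b)))))"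
    by (intro mono_sum_mset) (simp add: case_prod_beta)
  then show ?thesis
    using mono_fun_upd_apply[of z k "Inr p"] assms unfolding rlsvi_F_coords_def mono_def
    by (auto intro!: add_mono mult_left_mono)
qed

lemma rlsvi_F_coords_restrict:
  assumes "\<And>x' b. Inl (x', b) \<in> J" "Inr p \<in> J"
  shows "rlsvi_F_coords \<alpha> \<beta> D p (restrict z J) = rlsvi_F_coords \<alpha> \<beta> D p z"
  using assms by (simp add: rlsvi_F_coords_def)

lemma borel_measurable_rlsvi_F_coords:
  assumes "\<And>x' b. Inl (x', b) \<in> J" "Inr p \<in> J"
  shows "rlsvi_F_coords \<alpha> \<beta> D p \<in> borel_measurable (PiM J (\<lambda>_. borel))"
proof -
  have "(\<lambda>z. Max (range (\<lambda>b. z (Inl (x', b))))) \<in> borel_measurable (PiM J (\<lambda>_. borel :: real measure))"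
    for x'
    by (rule borel_measurable_Max) (auto intro!: measurable_component_singleton assms(1))
  then show ?thesis
    unfolding rlsvi_F_coords_def using assms(2)
    by (intro borel_measurable_add borel_measurable_times borel_measurable_sum_mset) auto
qed

lemma abs_rlsvi_F_coords_le:
  fixes z :: "'x \<times> 'a::finite + 'p \<Rightarrow> real"
  assumes "0 \<le> \<beta>" "finite J" "\<And>x' b. Inl (x', b) \<in> J" "Inr p \<in> J"
  shows "\<bar>rlsvi_F_coords \<alpha> \<beta> D p z\<bar>
    \<le> \<bar>\<alpha>\<bar> + \<beta> * (\<Sum>(r, x')\<in>#D. \<bar>r\<bar>) + (\<beta> * size D + 1) * (\<Sum>k\<in>J. \<bar>z k\<bar>)"
proof -
  let ?S = "\<Sum>k\<in>J. \<bar>z k\<bar>"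
  have coord_le: "\<bar>z k\<bar> \<le> ?S" if "k \<in> J" for k
    using assms(2) that by (intro member_le_sum) auto
  have Max_le: "\<bar>Max (range (\<lambda>b. z (Inl (x', b))))\<bar> \<le> ?S" for x'
  proof -
    have "Max (range (\<lambda>b. z (Inl (x', b)))) \<in> range (\<lambda>b. z (Inl (x', b)))"
      by (intro Max_in) auto
    then obtain b where "Max (range (\<lambda>b. z (Inl (x', b)))) = z (Inl (x', b))"
      by blast
    then show ?thesis
      using coord_le[OF assms(3)] by simp
  qed
  have sum_le: "\<bar>\<Sum>(r, x')\<in>#E. r + Max (range (\<lambda>b. z (Inl (x', b))))\<bar>
      \<le> (\<Sum>(r, x')\<in>#E. \<bar>r\<bar>) + size E * ?S" for E :: "(real \<times> 'x) multiset"
  proof (induction E)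
    case (add q E)
    then show ?case
      using Max_le[of "snd q"] by (simp add: case_prod_beta algebra_simps)
  qed simp
  have "\<bar>rlsvi_F_coords \<alpha> \<beta> D p z\<bar>
      \<le> \<bar>\<alpha>\<bar> + \<beta> * \<bar>\<Sum>(r, x')\<in>#D. r + Max (range (\<lambda>b. z (Inl (x', b))))\<bar> + \<bar>z (Inr p)\<bar>"
  proof -
    have "\<bar>\<alpha> + \<beta> * T + e\<bar> \<le> \<bar>\<alpha>\<bar> + \<beta> * \<bar>T\<bar> + \<bar>e\<bar>" for T e :: real
      using assms(1) abs_triangle_ineq[of "\<alpha> + \<beta> * T" e] abs_triangle_ineq[of \<alpha> "\<beta> * T"]
      by (simp add: abs_mult)
    then show ?thesis
      unfolding rlsvi_F_coords_def .
  qed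
  also have "\<dots> \<le> \<bar>\<alpha>\<bar> + \<beta> * ((\<Sum>(r, x')\<in>#D. \<bar>r\<bar>) + size D * ?S) + ?S"
    using sum_le[of D] coord_le[OF assms(4)] assms(1) by (intro add_mono mult_left_mono) auto
  finally show ?thesis
    by (simp add: algebra_simps)
qed

lemma stoch_opt_rlsvi_F_coords:
  fixes X Y :: "'x \<times> 'a::finite + 'p \<Rightarrow> 'w \<Rightarrow> real"
  assumes "prob_space M" "0 \<le> \<beta>" "finite J" "\<And>x' b. Inl (x', b) \<in> J" "Inr p \<in> J"
    and "prob_space.indep_vars M (\<lambda>_. borel) X J" "prob_space.indep_vars M (\<lambda>_. borel) Y J"
    and "\<And>i. i \<in> J \<Longrightarrow> stoch_opt M (X i) (Y i)"
  shows "stoch_opt M (\<lambda>\<omega>. rlsvi_F_coords \<alpha> \<beta> D p (\<lambda>i. X i \<omega>)) (\<lambda>\<omega>. rlsvi_F_coords \<alpha> \<beta> D p (\<lambda>i. Y i \<omega>))"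
proof (rule stoch_opt_indep_coordinatewise_convex[where G="rlsvi_F_coords \<alpha> \<beta> D p",
      OF assms(1,3) _ assms(6-8)])
  show "J \<noteq> {}"
    using assms(5) by auto
  show "rlsvi_F_coords \<alpha> \<beta> D p \<in> borel_measurable (PiM J (\<lambda>_. borel))"
    using assms(4,5) by (rule borel_measurable_rlsvi_F_coords)
  show "rlsvi_F_coords \<alpha> \<beta> D p (restrict z J) = rlsvi_F_coords \<alpha> \<beta> D p z" for z
    using assms(4,5) by (rule rlsvi_F_coords_restrict)
  show "convex_on UNIV (\<lambda>y. rlsvi_F_coords \<alpha> \<beta> D p (z(k := y)))"
    "mono (\<lambda>y. rlsvi_F_coords \<alpha> \<beta> D p (z(k := y)))" for z k
    using assms(2) by (rule convex_on_rlsvi_F_coords, rule mono_rlsvi_F_coords)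
  show "\<bar>rlsvi_F_coords \<alpha> \<beta> D p z\<bar>
      \<le> \<bar>\<alpha>\<bar> + \<beta> * (\<Sum>(r, x')\<in>#D. \<bar>r\<bar>) + (\<beta> * size D + 1) * (\<Sum>k\<in>J. \<bar>z k\<bar>)" for z
    using assms(2-5) by (rule abs_rlsvi_F_coords_le)
qed

theorem mainTheorem5:
  fixes M :: "'w measure"
    and hx :: "nat \<Rightarrow> nat \<Rightarrow> 'x::finite" and ha :: "nat \<Rightarrow> nat \<Rightarrow> 'a::finite"
    and hr :: "nat \<Rightarrow> nat \<Rightarrow> real"
    and l H :: nat and lam v :: real and th :: "nat \<Rightarrow> 'x \<Rightarrow> 'a \<Rightarrow> real"
    and w :: "nat \<Rightarrow> 'x \<Rightarrow> 'a \<Rightarrow> 'w \<Rightarrow> real"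
    and Q1 Q2 :: "'w \<Rightarrow> 'x \<Rightarrow> 'a \<Rightarrow> real"
  assumes "prob_space M"
    and "v > 0" and "lam > 0"
    and rewards: "\<forall>k t. hr k t \<in> {0, 1}"
    and w_normal: "\<forall>t<H. \<forall>x a. distributed M lborel (w t x a)
                 (normal_density 0 (sqrt (rlsvi_sigma2 lam v (size (hist_data hx ha hr l t x a)))))"
    and w_indep: "prob_space.indep_vars M (\<lambda>_. borel) (\<lambda>(t, x, a). w t x a) ({..<H} \<times> UNIV)"
    and Q1_indep: "prob_space.indep_vars M (\<lambda>_. borel)
           (\<lambda>i \<omega>. case i of Inl (x, a) \<Rightarrow> Q1 \<omega> x a | Inr (t, x, a) \<Rightarrow> w t x a \<omega>)
           (UNIV <+> ({..<H} \<times> UNIV))"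
    and Q2_indep: "prob_space.indep_vars M (\<lambda>_. borel)
           (\<lambda>i \<omega>. case i of Inl (x, a) \<Rightarrow> Q2 \<omega> x a | Inr (t, x, a) \<Rightarrow> w t x a \<omega>)
           (UNIV <+> ({..<H} \<times> UNIV))"
    and SO: "\<forall>x a. stoch_opt M (\<lambda>\<omega>. Q1 \<omega> x a) (\<lambda>\<omega>. Q2 \<omega> x a)"
  shows "\<forall>t<H. \<forall>x a.
           stoch_opt M
             (\<lambda>\<omega>. rlsvi_F lam v th (hist_data hx ha hr l) (\<lambda>t x a. w t x a \<omega>) t (Q1 \<omega>) x a)
             (\<lambda>\<omega>. rlsvi_F lam v th (hist_data hx ha hr l) (\<lambda>t x a. w t x a \<omega>) t (Q2 \<omega>) x a)"
proof (intro allI impI)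
  fix t x a assume "t < H"
  define J :: "('x \<times> 'a + nat \<times> 'x \<times> 'a) set" where "J = UNIV <+> ({..<H} \<times> UNIV)"
  define coords where "coords Q = (\<lambda>i \<omega>. case i of Inl (x, a) \<Rightarrow> Q \<omega> x a | Inr (t, x, a) \<Rightarrow> w t x a \<omega>)"
    for Q :: "'w \<Rightarrow> 'x \<Rightarrow> 'a \<Rightarrow> real"
  define D where "D = hist_data hx ha hr l t x a"
  define \<sigma>2 where "\<sigma>2 = rlsvi_sigma2 lam v (size D)"
  have "0 \<le> \<sigma>2 / v"
    using \<open>v > 0\<close> \<open>lam > 0\<close> by (simp add: \<sigma>2_def rlsvi_sigma2_def add_pos_nonneg)
  have w: "w t' x' b \<in> borel_measurable M" "integrable M (w t' x' b)" if "t' < H" for t' x' b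
    using distributed_normal_integrable[OF w_normal[rule_format, OF that]] \<open>v > 0\<close> \<open>lam > 0\<close>
    by (simp_all add: rlsvi_sigma2_def add_pos_nonneg)
  have "stoch_opt M (coords Q1 i) (coords Q2 i)" if "i \<in> J" for i
    using that SO w by (cases i) (auto simp: J_def coords_def intro: stoch_opt_refl)
  then have "stoch_opt M
      (\<lambda>\<omega>. rlsvi_F_coords (\<sigma>2 * (th t x a / lam)) (\<sigma>2 / v) D (t, x, a) (\<lambda>i. coords Q1 i \<omega>))
      (\<lambda>\<omega>. rlsvi_F_coords (\<sigma>2 * (th t x a / lam)) (\<sigma>2 / v) D (t, x, a) (\<lambda>i. coords Q2 i \<omega>))"
    using \<open>prob_space M\<close> \<open>0 \<le> \<sigma>2 / v\<close> \<open>t < H\<close> Q1_indep Q2_indep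
    by (intro stoch_opt_rlsvi_F_coords) (auto simp: J_def coords_def)
  then show "stoch_opt M
      (\<lambda>\<omega>. rlsvi_F lam v th (hist_data hx ha hr l) (\<lambda>t x a. w t x a \<omega>) t (Q1 \<omega>) x a)
      (\<lambda>\<omega>. rlsvi_F lam v th (hist_data hx ha hr l) (\<lambda>t x a. w t x a \<omega>) t (Q2 \<omega>) x a)"
    by (simp add: rlsvi_F_eq_coords coords_def \<sigma>2_def D_def)
qed

end
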